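(* Let $\mathbb{T}$ be a time scale, $\alpha\in]0,1]$, and let $f,g:\mathbb{T}\to\mathbb{R}$ be nabla fractional differentiable of order $\alpha$ at $t\in\mathbb{T}_\kappa$. Then: (i) $f+g$ is nabla fractional differentiable of order $\alpha$ at $t$ with $(f+g)^{\nabla^\alpha}(t)=f^{\nabla^\alpha}(t)+g^{\nabla^\alpha}(t)$; (ii) for every $\lambda\in\mathbb{R}$, $\lambda f$ is nabla fractional differentiable of order $\alpha$ at $t$ with $(\lambda f)^{\nabla^\alpha}(t)=\lambda f^{\nabla^\alpha}(t)$; (iii) if $f$ and $g$ are continuous, then $fg$ is nabla fractional differentiable of order $\alpha$ at $t$ with $$(fg)^{\nabla^\alpha}(t)=f^{\nabla^\alpha}(t)g(t)+f^\rho(t)g^{\nabla^\alpha}(t)=f^{\nabla^\alpha}(t)g^\rho(t)+f(t)g^{\nabla^\alpha}(t);$$ (iv) if $f$ is continuous and $f^\rho(t)f(t)\neq0$, then $1/f$ is nabla fractional differentiable of order $\alpha$ at $t$ with $\left(\frac1f\right)^{\nabla^\alpha}(t)=-\frac{f^{\nabla^\alpha}(t)}{f^\rho(t)f(t)}$; (v) if $f$ and $g$ are continuous and $g^\rho(t)g(t)\neq0$, then $f/g$ is nabla fractional differentiable of order $\alpha$ at $t$ with $$\left(\frac fg\right)^{\nabla^\alpha}(t)=\frac{f^{\nabla^\alpha}(t)g(t)-f(t)g^{\nabla^\alpha}(t)}{g^\rho(t)g(t)}.$$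
   Context: A time scale $\mathbb{T}$ is a nonempty closed subset of $\mathbb{R}$ with the induced topology. $\rho(t)=\sup\{s\in\mathbb{T}: s<t\}$ (with $\sup\emptyset=\inf\mathbb{T}$), $\sigma(t)=\inf\{s\in\mathbb{T}:s>t\}$ (with $\inf\emptyset=\sup\mathbb{T}$), $f^\rho=f\circ\rho$. $\mathbb{T}_\kappa=\mathbb{T}\setminus\{\inf\mathbb{T}\}$ if $\inf\mathbb{T}$ is finite with $\sigma(\inf\mathbb{T})>\inf\mathbb{T}$, otherwise $\mathbb{T}_\kappa=\mathbb{T}$. Let $A=\,]0,1]\cap\{1/q: q\text{ odd positive integer}\}$; for $\alpha=1/q\in A$, $x^\alpha$ is the real $q$-th root. For $t\in\mathbb{T}_\kappa$, $f^{\nabla^\alpha}(t)$ is the real number (if it exists) such that for every $\varepsilon>0$ there is $\delta>0$ with $\big|[f(s)-f^\rho(t)]-f^{\nabla^\alpha}(t)[s-\rho(t)]^\alpha\big|\le\varepsilon|s-\rho(t)|^\alpha$ for all $s\in\,]t-\delta,t+\delta[\,\cap\mathbb{T}$ if $\alpha\in A$, resp. all $s\in[t,t+\delta[\,\cap\mathbb{T}$ if $\alpha\notin A$; if it exists, $f$ is nabla fractional differentiable of order $\alpha$ at $t$. *)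

theory Defs
  imports Complex_Main
begin

definition time_scale :: "real set \<Rightarrow> bool" where
  "time_scale T \<longleftrightarrow> T \<noteq> {} \<and> closed T"

text \<open>backward jump operator; sup of the empty set is inf T (then t = min T)\<close>
definition rho :: "real set \<Rightarrow> real \<Rightarrow> real" where
  "rho T t = (if {s\<in>T. s < t} = {} then Inf T else Sup {s\<in>T. s < t})"

definition sigma :: "real set \<Rightarrow> real \<Rightarrow> real" where
  "sigma T t = (if {s\<in>T. s > t} = {} then Sup T else Inf {s\<in>T. s > t})"

definition T_kappa :: "real set \<Rightarrow> real set" where
  "T_kappa T = (if bdd_below T \<and> sigma T (Inf T) > Inf T then T - {Inf T} else T)"

definition in_A :: "real \<Rightarrow> bool" where
  "in_A \<alpha> \<longleftrightarrow> (\<exists>q::nat. odd q \<and> q > 0 \<and> \<alpha> = 1 / real q)"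

text \<open>x^alpha: real q-th root for alpha = 1/q in A, otherwise x powr alpha (used for x \<ge> 0)\<close>
definition fpow :: "real \<Rightarrow> real \<Rightarrow> real" where
  "fpow \<alpha> x = (if in_A \<alpha> then root (nat \<lfloor>1 / \<alpha>\<rfloor>) x else x powr \<alpha>)"

definition has_nabla_frac_deriv ::
  "real set \<Rightarrow> real \<Rightarrow> (real \<Rightarrow> real) \<Rightarrow> real \<Rightarrow> real \<Rightarrow> bool" where
  "has_nabla_frac_deriv T \<alpha> f D t \<longleftrightarrow> t \<in> T_kappa T \<and>
     (\<forall>\<epsilon>>0. \<exists>\<delta>>0. \<forall>s\<in>T.
        (if in_A \<alpha> then t - \<delta> < s \<and> s < t + \<delta> else t \<le> s \<and> s < t + \<delta>) \<longrightarrow>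
        \<bar>(f s - f (rho T t)) - D * fpow \<alpha> (s - rho T t)\<bar> \<le> \<epsilon> * fpow \<alpha> \<bar>s - rho T t\<bar>)"

end

theory Submission
  imports Defs "HOL-Library.Landau_Symbols"
begin

text \<open>The defining condition says that the remainder
  \<open>f s - f\<^sup>\<rho>(t) - D (s - \<rho>(t))\<^sup>\<alpha>\<close> is \<open>o(|s - \<rho>(t)|\<^sup>\<alpha>)\<close> along the filter of points of
  \<open>T\<close> near \<open>t\<close> (to the right of \<open>t\<close> when \<open>\<alpha> \<notin> A\<close>). The differentiation rules then follow
  from the Landau calculus exactly as for classical derivatives: besides the hypotheses on
  \<open>f\<close> and \<open>g\<close>, the product and reciprocal rules only use that
  \<open>(s - \<rho>(t))\<^sup>\<alpha> = O(|s - \<rho>(t)|\<^sup>\<alpha>)\<close> and that a continuous factor tends to its value at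
  \<open>t\<close>.\<close>

lemma smallo_increment_mult:
  fixes f g p q :: "'a \<Rightarrow> real"
  assumes f: "(\<lambda>x. f x - f0 - Df * p x) \<in> o[F](q)"
    and g: "(\<lambda>x. g x - g0 - Dg * p x) \<in> o[F](q)"
    and lim: "(f \<longlongrightarrow> f1) F" and p: "p \<in> O[F](q)"
  shows "(\<lambda>x. f x * g x - f0 * g0 - (Df * g0 + f1 * Dg) * p x) \<in> o[F](q)"
proof -
  have f_bounded: "f \<in> O[F](\<lambda>_. 1)"
    using lim by (intro bigoI_tendsto[where c = f1]) auto
  have f_near: "(\<lambda>x. f x - f1) \<in> o[F](\<lambda>_. 1)"
    using lim by (intro smalloI_tendsto) (auto intro: tendsto_eq_intros)
  have "(\<lambda>x. (f x - f0 - Df * p x) * g0) \<in> o[F](q)"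
    using f by simp
  moreover have "(\<lambda>x. f x * (g x - g0 - Dg * p x)) \<in> o[F](q)"
    using landau_o.big_small_mult[OF f_bounded g] by simp
  moreover have "(\<lambda>x. (f x - f1) * (Dg * p x)) \<in> o[F](q)"
    using landau_o.small_big_mult[OF f_near, of "\<lambda>x. Dg * p x" q] p by simp
  ultimately have "(\<lambda>x. (f x - f0 - Df * p x) * g0 + f x * (g x - g0 - Dg * p x)
      + (f x - f1) * (Dg * p x)) \<in> o[F](q)"
    by (intro sum_in_smallo)
  then show ?thesis
    by (simp add: algebra_simps)
qed

lemma smallo_increment_inverse:
  fixes f p q :: "'a \<Rightarrow> real"
  assumes f: "(\<lambda>x. f x - f0 - Df * p x) \<in> o[F](q)"
    and lim: "(f \<longlongrightarrow> f1) F" and "f0 \<noteq> 0" "f1 \<noteq> 0" and p: "p \<in> O[F](q)"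
  shows "(\<lambda>x. 1 / f x - 1 / f0 - (- Df / (f0 * f1)) * p x) \<in> o[F](q)"
proof -
  have inv_bounded: "(\<lambda>x. 1 / f x) \<in> O[F](\<lambda>_. 1)"
    using lim \<open>f1 \<noteq> 0\<close> by (intro bigoI_tendsto[where c = "1 / f1"]) (auto intro: tendsto_eq_intros)
  have f_near: "(\<lambda>x. f x - f1) \<in> o[F](\<lambda>_. 1)"
    using lim by (intro smalloI_tendsto) (auto intro: tendsto_eq_intros)
  have "(\<lambda>x. (f x - f0 - Df * p x) / f x) \<in> o[F](q)"
    using landau_o.big_small_mult[OF inv_bounded f] by simp
  then have "(\<lambda>x. (f x - f0 - Df * p x) / f x * (- 1 / f0)) \<in> o[F](q)"
    using \<open>f0 \<noteq> 0\<close> by (intro landau_o.small.cmult_in_iff'[THEN iffD2]) auto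
  moreover have "(\<lambda>x. (f x - f1) * (Df * p x)) \<in> o[F](q)"
    using landau_o.small_big_mult[OF f_near, of "\<lambda>x. Df * p x" q] p by simp
  from landau_o.big_small_mult[OF inv_bounded this]
  have "(\<lambda>x. (f x - f1) * (Df * p x) / f x) \<in> o[F](q)"
    by simp
  then have "(\<lambda>x. (f x - f1) * (Df * p x) / f x * (1 / (f0 * f1))) \<in> o[F](q)"
    using assms(3,4) by (intro landau_o.small.cmult_in_iff'[THEN iffD2]) auto
  ultimately have sum: "(\<lambda>x. (f x - f0 - Df * p x) / f x * (- 1 / f0)
      + (f x - f1) * (Df * p x) / f x * (1 / (f0 * f1))) \<in> o[F](q)"
    by (intro sum_in_smallo)
  have "eventually (\<lambda>x. f x \<noteq> 0) F"
    using lim \<open>f1 \<noteq> 0\<close> by (rule tendsto_imp_eventually_ne)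
  moreover have "(y - f0 - Df * u) / y * (- 1 / f0) + (y - f1) * (Df * u) / y * (1 / (f0 * f1))
      = 1 / y - 1 / f0 - (- Df / (f0 * f1)) * u" if "y \<noteq> 0" for y u
    using that assms(3,4) by (simp add: field_simps)
  ultimately have "eventually (\<lambda>x. (f x - f0 - Df * p x) / f x * (- 1 / f0)
      + (f x - f1) * (Df * p x) / f x * (1 / (f0 * f1))
      = 1 / f x - 1 / f0 - (- Df / (f0 * f1)) * p x) F"
    by (auto elim!: eventually_mono)
  from landau_o.small.in_cong[OF this] sum show ?thesis
    by simp
qed

definition nabla_filter :: "real set \<Rightarrow> real \<Rightarrow> real \<Rightarrow> real filter" where
  "nabla_filter T \<alpha> t = inf (nhds t) (principal (if in_A \<alpha> then T else T \<inter> {t..}))"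

lemma eventually_nabla_filter:
  "eventually P (nabla_filter T \<alpha> t) \<longleftrightarrow>
     (\<exists>\<delta>>0. \<forall>s\<in>T. (if in_A \<alpha> then t - \<delta> < s \<and> s < t + \<delta> else t \<le> s \<and> s < t + \<delta>) \<longrightarrow> P s)"
  unfolding nabla_filter_def eventually_inf_principal eventually_nhds_metric dist_real_def
  by (intro ex_cong1 conj_cong refl) (auto simp: abs_less_iff)

lemma fpow_abs_nonneg: "fpow \<alpha> \<bar>x\<bar> \<ge> 0"
  by (simp add: fpow_def real_root_ge_zero)

lemma fpow_abs:
  assumes "in_A \<alpha>"
  shows "fpow \<alpha> \<bar>x\<bar> = \<bar>fpow \<alpha> x\<bar>"
proof -
  obtain q :: nat where "odd q" "q > 0" "\<alpha> = 1 / real q"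
    using assms by (auto simp: in_A_def)
  then show ?thesis
    using assms by (simp add: fpow_def real_root_abs)
qed

lemma has_nabla_frac_deriv_iff_smallo:
  "has_nabla_frac_deriv T \<alpha> f D t \<longleftrightarrow> t \<in> T_kappa T \<and>
     (\<lambda>s. f s - f (rho T t) - D * fpow \<alpha> (s - rho T t))
       \<in> o[nabla_filter T \<alpha> t](\<lambda>s. fpow \<alpha> \<bar>s - rho T t\<bar>)"
  unfolding has_nabla_frac_deriv_def smallo_def eventually_nabla_filter
  by (simp add: fpow_abs_nonneg)

lemma fpow_increment_bigo:
  assumes "r \<le> t"
  shows "(\<lambda>s. fpow \<alpha> (s - r)) \<in> O[nabla_filter T \<alpha> t](\<lambda>s. fpow \<alpha> \<bar>s - r\<bar>)"
proof (rule landau_o.bigI[of 1])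
  have "\<bar>fpow \<alpha> (s - r)\<bar> \<le> \<bar>fpow \<alpha> \<bar>s - r\<bar>\<bar>" if "\<not> in_A \<alpha> \<Longrightarrow> t \<le> s" for s
  proof (cases "in_A \<alpha>")
    case True
    then show ?thesis by (simp add: fpow_abs)
  next
    case False
    then show ?thesis using that \<open>r \<le> t\<close> by simp
  qed
  then show "eventually (\<lambda>s. norm (fpow \<alpha> (s - r)) \<le> 1 * norm (fpow \<alpha> \<bar>s - r\<bar>))
      (nabla_filter T \<alpha> t)"
    unfolding eventually_nabla_filter by (intro exI[of _ 1]) auto
qed simp

lemma T_kappa_subset: "T_kappa T \<subseteq> T"
  by (auto simp: T_kappa_def)

lemma rho_le:
  assumes "t \<in> T"
  shows "rho T t \<le> t"
proof (cases "{s\<in>T. s < t} = {}")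
  case True
  then have "bdd_below T"
    by (auto simp: bdd_below_def not_less)
  then have "Inf T \<le> t"
    using assms by (simp add: cInf_lower)
  then show ?thesis
    using True by (simp add: rho_def)
next
  case False
  then have "Sup {s\<in>T. s < t} \<le> t"
    by (intro cSup_least) auto
  then show ?thesis
    using False by (auto simp: rho_def)
qed

lemma continuous_on_tendsto_nabla_filter:
  assumes "continuous_on T f" "t \<in> T"
  shows "(f \<longlongrightarrow> f t) (nabla_filter T \<alpha> t)"
proof -
  have "(f \<longlongrightarrow> f t) (inf (nhds t) (principal T))"
    using assms by (simp add: continuous_on_def tendsto_at_within_iff_tendsto_nhds)
  moreover have "nabla_filter T \<alpha> t \<le> inf (nhds t) (principal T)"
    unfolding nabla_filter_def by (intro inf_mono) auto
  ultimately show ?thesis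
    by (rule tendsto_mono[rotated])
qed

lemma has_nabla_frac_deriv_add:
  assumes "has_nabla_frac_deriv T \<alpha> f Df t" "has_nabla_frac_deriv T \<alpha> g Dg t"
  shows "has_nabla_frac_deriv T \<alpha> (\<lambda>s. f s + g s) (Df + Dg) t"
  using assms sum_in_smallo(1) unfolding has_nabla_frac_deriv_iff_smallo
  by (fastforce simp: algebra_simps)

lemma has_nabla_frac_deriv_cmult:
  assumes "has_nabla_frac_deriv T \<alpha> f Df t"
  shows "has_nabla_frac_deriv T \<alpha> (\<lambda>s. c * f s) (c * Df) t"
  using assms unfolding has_nabla_frac_deriv_iff_smallo
  by (simp add: mult.assoc flip: right_diff_distrib)

lemma has_nabla_frac_deriv_mult:
  assumes f: "has_nabla_frac_deriv T \<alpha> f Df t" and g: "has_nabla_frac_deriv T \<alpha> g Dg t"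
    and "continuous_on T f"
  shows "has_nabla_frac_deriv T \<alpha> (\<lambda>s. f s * g s) (Df * g (rho T t) + f t * Dg) t"
proof -
  have t: "t \<in> T"
    using f T_kappa_subset by (auto simp: has_nabla_frac_deriv_def)
  show ?thesis
    using f g smallo_increment_mult[OF _ _ continuous_on_tendsto_nabla_filter fpow_increment_bigo]
      \<open>continuous_on T f\<close> t rho_le[OF t]
    unfolding has_nabla_frac_deriv_iff_smallo by blast
qed

lemma has_nabla_frac_deriv_inverse:
  assumes f: "has_nabla_frac_deriv T \<alpha> f Df t" and "continuous_on T f"
    and "f (rho T t) \<noteq> 0" "f t \<noteq> 0"
  shows "has_nabla_frac_deriv T \<alpha> (\<lambda>s. 1 / f s) (- Df / (f (rho T t) * f t)) t"
proof -
  have t: "t \<in> T"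
    using f T_kappa_subset by (auto simp: has_nabla_frac_deriv_def)
  show ?thesis
    using f smallo_increment_inverse[OF _ continuous_on_tendsto_nabla_filter _ _ fpow_increment_bigo]
      assms(2-4) t rho_le[OF t]
    unfolding has_nabla_frac_deriv_iff_smallo by blast
qed

lemma has_nabla_frac_deriv_divide:
  assumes f: "has_nabla_frac_deriv T \<alpha> f Df t" and g: "has_nabla_frac_deriv T \<alpha> g Dg t"
    and "continuous_on T f" "continuous_on T g" "g (rho T t) \<noteq> 0" "g t \<noteq> 0"
  shows "has_nabla_frac_deriv T \<alpha> (\<lambda>s. f s / g s)
    ((Df * g t - f t * Dg) / (g (rho T t) * g t)) t"
proof -
  have "has_nabla_frac_deriv T \<alpha> (\<lambda>s. f s * (1 / g s))
      (Df * (1 / g (rho T t)) + f t * (- Dg / (g (rho T t) * g t))) t"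
    using assms by (intro has_nabla_frac_deriv_mult has_nabla_frac_deriv_inverse)
  moreover have "Df * (1 / g (rho T t)) + f t * (- Dg / (g (rho T t) * g t))
      = (Df * g t - f t * Dg) / (g (rho T t) * g t)"
    using assms(5,6) by (simp add: field_simps)
  ultimately show ?thesis
    by simp
qed

theorem theorem3p10:
  fixes T :: "real set" and \<alpha> t Df Dg :: real and f g :: "real \<Rightarrow> real"
  assumes "time_scale T" and "0 < \<alpha>" and "\<alpha> \<le> 1" and "t \<in> T_kappa T"
    and hf: "has_nabla_frac_deriv T \<alpha> f Df t"
    and hg: "has_nabla_frac_deriv T \<alpha> g Dg t"
  shows "has_nabla_frac_deriv T \<alpha> (\<lambda>s. f s + g s) (Df + Dg) t
    \<and> (\<forall>c::real. has_nabla_frac_deriv T \<alpha> (\<lambda>s. c * f s) (c * Df) t)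
    \<and> (continuous_on T f \<longrightarrow> continuous_on T g \<longrightarrow>
           has_nabla_frac_deriv T \<alpha> (\<lambda>s. f s * g s) (Df * g t + f (rho T t) * Dg) t
         \<and> has_nabla_frac_deriv T \<alpha> (\<lambda>s. f s * g s) (Df * g (rho T t) + f t * Dg) t)
    \<and> (continuous_on T f \<longrightarrow> f (rho T t) * f t \<noteq> 0 \<longrightarrow>
           has_nabla_frac_deriv T \<alpha> (\<lambda>s. 1 / f s) (- Df / (f (rho T t) * f t)) t)
    \<and> (continuous_on T f \<longrightarrow> continuous_on T g \<longrightarrow> g (rho T t) * g t \<noteq> 0 \<longrightarrow>
           has_nabla_frac_deriv T \<alpha> (\<lambda>s. f s / g s)
             ((Df * g t - f t * Dg) / (g (rho T t) * g t)) t)"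
proof (intro conjI allI impI)
  assume "continuous_on T g"
  from has_nabla_frac_deriv_mult[OF hg hf this]
  show "has_nabla_frac_deriv T \<alpha> (\<lambda>s. f s * g s) (Df * g t + f (rho T t) * Dg) t"
    by (simp add: mult.commute add.commute)
next
  assume "continuous_on T f" "f (rho T t) * f t \<noteq> 0"
  with hf show "has_nabla_frac_deriv T \<alpha> (\<lambda>s. 1 / f s) (- Df / (f (rho T t) * f t)) t"
    by (intro has_nabla_frac_deriv_inverse) auto
qed (use hf hg in \<open>auto intro: has_nabla_frac_deriv_add has_nabla_frac_deriv_cmult
      has_nabla_frac_deriv_mult has_nabla_frac_deriv_divide\<close>)

end
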